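(* In the probit setting below, the posterior mode $\hat B$ satisfies $\int_{\mathbb{R}^p}\beta\,k(\hat B,\beta)\,d\beta=\hat B$.
   Context: Probit setting: covariates $X_1,\dots,X_n\in\mathbb{R}^p$, responses $Y_i\in\{0,1\}$, $X$ the $n\times p$ matrix with rows $X_i^T$; prior $\omega(\beta)\propto\exp\{-\frac12(\beta-v)^TQ(\beta-v)\}$, $Q$ positive definite or zero; posterior density $\pi(\beta)\propto\prod_i\Phi(X_i^T\beta)^{Y_i}(1-\Phi(X_i^T\beta))^{1-Y_i}\omega(\beta)$ ($\Phi$ standard normal cdf), assumed proper; it is log-concave and $\hat B$ denotes its unique maximizer. $\Sigma=X^TX+Q$. $\mathrm{TN}(\theta,1;1)$ / $\mathrm{TN}(\theta,1;0)$ denote $N(\theta,1)$ truncated to $(0,\infty)$ / $(-\infty,0)$. $k(\beta,\beta')$ is the transition density of the Albert–Chib chain, which moves from $\beta$ by drawing $Z_i\sim\mathrm{TN}(X_i^T\beta,1;Y_i)$ independently and then the new state from $N_p(\Sigma^{-1}(X^TZ+Qv),\Sigma^{-1})$. *)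

theory Defs
  imports "HOL-Probability.Probability"
begin

definition Phi :: "real \<Rightarrow> real" where
  "Phi x = (LBINT t:{..x}. std_normal_density t)"

definition tn_density :: "real \<Rightarrow> real \<Rightarrow> real \<Rightarrow> real" where
  "tn_density theta y z =
     (if y = 1 then (if z > 0 then normal_density theta 1 z / Phi theta else 0)
      else (if z < 0 then normal_density theta 1 z / (1 - Phi theta) else 0))"

text \<open>Density of N_p(m, S^{-1}) given the precision matrix S (positive definite).\<close>
definition mvn_prec_density :: "real^'p \<Rightarrow> real^'p^'p \<Rightarrow> real^'p \<Rightarrow> real" where
  "mvn_prec_density m S x =
     (2 * pi) powr (- real CARD('p) / 2) * sqrt (det S)
       * exp (- ((x - m) \<bullet> (S *v (x - m))) / 2)"

definition probit_prior :: "real^'p^'p \<Rightarrow> real^'p \<Rightarrow> real^'p \<Rightarrow> real" where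
  "probit_prior Q v beta = exp (- ((beta - v) \<bullet> (Q *v (beta - v))) / 2)"

definition probit_post :: "real^'p^'n \<Rightarrow> ('n \<Rightarrow> real) \<Rightarrow> real^'p^'p \<Rightarrow> real^'p
    \<Rightarrow> real^'p \<Rightarrow> real" where
  "probit_post X Y Q v beta =
     (\<Prod>i\<in>UNIV. Phi ((X $ i) \<bullet> beta) powr (Y i) * (1 - Phi ((X $ i) \<bullet> beta)) powr (1 - Y i))
       * probit_prior Q v beta"

definition ac_Sigma :: "real^'p^'n \<Rightarrow> real^'p^'p \<Rightarrow> real^'p^'p" where
  "ac_Sigma X Q = transpose X ** X + Q"

definition ac_kernel :: "real^'p^'n \<Rightarrow> ('n \<Rightarrow> real) \<Rightarrow> real^'p^'p \<Rightarrow> real^'p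
    \<Rightarrow> real^'p \<Rightarrow> real^'p \<Rightarrow> real" where
  "ac_kernel X Y Q v beta beta' =
     (\<integral>z. (\<Prod>i\<in>UNIV. tn_density ((X $ i) \<bullet> beta) (Y i) (z $ i))
        * mvn_prec_density (matrix_inv (ac_Sigma X Q) *v (transpose X *v z + Q *v v))
                           (ac_Sigma X Q) beta' \<partial>(lborel :: (real^'n) measure))"

definition pos_def_mat :: "real^'p^'p \<Rightarrow> bool" where
  "pos_def_mat Q \<longleftrightarrow> transpose Q = Q \<and> (\<forall>x. x \<noteq> 0 \<longrightarrow> x \<bullet> (Q *v x) > 0)"

end

(*
  The Albert-Chib kernel moves from B by drawing z from the product of the truncated normals
  TN(X_i B, 1; Y_i) and then the new state from N_p(Sigma^-1 (X^T z + Q v), Sigma^-1); by Fubini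
  its mean is Sigma^-1 (X^T E[z] + Q v). The mean of TN(theta, 1; y) is theta plus the derivative
  of log P(Y = y | theta) (the probit score), so E[z] = X B + s(B) with s the score vector. At the
  posterior mode the gradient of the log-posterior vanishes, X^T s(B) = Q (B - v), hence
  X^T E[z] + Q v = (X^T X + Q) B = Sigma B and the mean is B.

  The normalising constant of N_p is computed by symmetric Gaussian elimination with shears of
  determinant 1, which preserve Lebesgue measure. Sigma is positive definite because Q is or,
  when Q = 0, because a kernel vector of X would make the posterior constant along a line and
  hence not integrable.
*)
theory Submission
  imports Defs "HOL-Real_Asymp.Real_Asymp"
begin

section \<open>Lebesgue measure on \<open>real^'n\<close> as a product measure\<close>

lemma Basis_vec_eq_range_axis: "(Basis :: (real^'n) set) = range (\<lambda>i. axis i 1)"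
  by (auto simp: Basis_vec_def)

lemma measurable_vec_lambda [measurable]:
  "(\<lambda>f. \<chi> i. f i) \<in> measurable (PiM UNIV (\<lambda>_::'n. lborel)) (borel :: (real^'n::finite) measure)"
proof -
  have "(\<lambda>f. (\<chi> i. f i) \<bullet> axis i 1) \<in> borel_measurable (PiM UNIV (\<lambda>_::'n. lborel))" for i
    by (simp add: inner_axis)
  then show ?thesis
    by (subst borel_measurable_euclidean_space) (auto simp: Basis_vec_eq_range_axis)
qed

lemma product_sigma_finite_lborel: "product_sigma_finite (\<lambda>_::'n. lborel::real measure)"
  by (simp add: product_sigma_finite_def sigma_finite_lborel)

lemma lborel_vec_eq_distr_PiM:
  "(lborel :: (real^'n::finite) measure) = distr (PiM UNIV (\<lambda>_. lborel)) borel (\<lambda>f. \<chi> i. f i)"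
proof (rule lborel_eqI)
  fix l u :: "real^'n"
  assume "\<And>b. b \<in> Basis \<Longrightarrow> l \<bullet> b \<le> u \<bullet> b"
  from this[of "axis i 1" for i] have le: "\<And>i. l $ i \<le> u $ i"
    by (auto simp: Basis_vec_eq_range_axis inner_axis)
  interpret product_sigma_finite "\<lambda>_::'n. lborel::real measure"
    by (rule product_sigma_finite_lborel)
  have "(\<lambda>f. \<chi> i. f i) -` box l u \<inter> space (PiM UNIV (\<lambda>_::'n. lborel)) = PiE UNIV (\<lambda>i. {l$i<..<u$i})"
    by (auto simp: space_PiM mem_box_cart PiE_def Pi_def extensional_def)
  then have "emeasure (distr (PiM UNIV (\<lambda>_. lborel)) borel (\<lambda>f. \<chi> i. f i)) (box l u)
      = emeasure (PiM UNIV (\<lambda>_::'n. lborel)) (PiE UNIV (\<lambda>i. {l$i<..<u$i}))"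
    by (simp add: emeasure_distr)
  also have "\<dots> = (\<Prod>i\<in>UNIV. ennreal (u$i - l$i))"
    using le by (subst emeasure_PiM) (auto simp: emeasure_lborel_Ioo)
  also have "\<dots> = ennreal (\<Prod>b\<in>Basis. (u - l) \<bullet> b)"
    using le by (simp add: prod_ennreal Basis_vec_eq_range_axis prod.reindex inj_on_def
        axis_eq_axis inner_axis)
  finally show "emeasure (distr (PiM UNIV (\<lambda>_. lborel)) borel (\<lambda>f. \<chi> i. f i)) (box l u)
      = (\<Prod>b\<in>Basis. (u - l) \<bullet> b)" .
qed simp

lemma
  fixes g :: "real^'n::finite \<Rightarrow> 'b::{banach, second_countable_topology}"
  assumes [measurable]: "g \<in> borel_measurable borel"
  shows integral_lborel_vec_eq_PiM: "integral\<^sup>L lborel g = (\<integral>f. g (\<chi> i. f i) \<partial>PiM UNIV (\<lambda>_. lborel))"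
    and integrable_lborel_vec_iff_PiM:
      "integrable lborel g \<longleftrightarrow> integrable (PiM UNIV (\<lambda>_. lborel)) (\<lambda>f. g (\<chi> i. f i))"
proof -
  show "integral\<^sup>L lborel g = (\<integral>f. g (\<chi> i. f i) \<partial>PiM UNIV (\<lambda>_. lborel))"
    by (subst lborel_vec_eq_distr_PiM, subst integral_distr) (simp_all add: comp_def)
  show "integrable lborel g \<longleftrightarrow> integrable (PiM UNIV (\<lambda>_. lborel)) (\<lambda>f. g (\<chi> i. f i))"
    using integrable_distr_eq[of "\<lambda>f. \<chi> i. f i" "PiM UNIV (\<lambda>_. lborel)" borel g]
    by (simp add: lborel_vec_eq_distr_PiM[symmetric])
qed

lemma nn_integral_lborel_vec_eq_PiM:
  fixes g :: "real^'n::finite \<Rightarrow> ennreal"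
  assumes [measurable]: "g \<in> borel_measurable borel"
  shows "integral\<^sup>N lborel g = (\<integral>\<^sup>+f. g (\<chi> i. f i) \<partial>PiM UNIV (\<lambda>_. lborel))"
  by (subst lborel_vec_eq_distr_PiM, subst nn_integral_distr) auto

lemma
  fixes g :: "'n::finite \<Rightarrow> real \<Rightarrow> real"
  assumes int: "\<And>i. integrable lborel (g i)"
  shows integrable_prod_vec_nth: "integrable lborel (\<lambda>z::real^'n. \<Prod>i\<in>UNIV. g i (z$i))"
    and integral_prod_vec_nth:
      "(\<integral>z. (\<Prod>i\<in>UNIV. g i (z$i)) \<partial>(lborel::(real^'n) measure)) = (\<Prod>i\<in>UNIV. integral\<^sup>L lborel (g i))"
proof -
  interpret product_sigma_finite "\<lambda>_::'n. lborel::real measure"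
    by (rule product_sigma_finite_lborel)
  have [measurable]: "\<And>i. g i \<in> borel_measurable borel"
    using int by auto
  show "integrable lborel (\<lambda>z::real^'n. \<Prod>i\<in>UNIV. g i (z$i))"
    by (subst integrable_lborel_vec_iff_PiM) (auto intro!: product_integrable_prod int)
  show "(\<integral>z. (\<Prod>i\<in>UNIV. g i (z$i)) \<partial>(lborel::(real^'n) measure)) = (\<Prod>i\<in>UNIV. integral\<^sup>L lborel (g i))"
    by (subst integral_lborel_vec_eq_PiM) (auto intro!: product_integral_prod int)
qed

lemma nn_integral_prod_vec_nth:
  fixes g :: "'n::finite \<Rightarrow> real \<Rightarrow> ennreal"
  assumes [measurable]: "\<And>i. g i \<in> borel_measurable borel"
  shows "(\<integral>\<^sup>+z. (\<Prod>i\<in>UNIV. g i (z$i)) \<partial>(lborel::(real^'n) measure)) = (\<Prod>i\<in>UNIV. integral\<^sup>N lborel (g i))"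
proof -
  interpret product_sigma_finite "\<lambda>_::'n. lborel::real measure"
    by (rule product_sigma_finite_lborel)
  show ?thesis
    by (subst nn_integral_lborel_vec_eq_PiM) (auto intro!: product_nn_integral_prod)
qed

lemma nn_integral_lborel_vec_coordinate:
  fixes F :: "real^'n::finite \<Rightarrow> ennreal"
  assumes [measurable]: "F \<in> borel_measurable borel"
  shows "integral\<^sup>N lborel F
    = (\<integral>\<^sup>+x. (\<integral>\<^sup>+y. F (\<chi> i. (x(k := y)) i) \<partial>lborel) \<partial>PiM (UNIV - {k}) (\<lambda>_. lborel))"
proof -
  interpret product_sigma_finite "\<lambda>_::'n. lborel::real measure"
    by (rule product_sigma_finite_lborel)
  show ?thesis
    using product_nn_integral_insert[of "UNIV - {k}" k "\<lambda>f. F (\<chi> i. f i)"]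
    by (simp add: nn_integral_lborel_vec_eq_PiM)
qed

lemma nn_integral_shear:
  fixes f :: "real^'n::finite \<Rightarrow> ennreal" and c :: "real^'n \<Rightarrow> real"
  assumes [measurable]: "f \<in> borel_measurable borel" "c \<in> borel_measurable borel"
    and c_invariant: "\<And>x t. c (x + t *\<^sub>R axis k 1) = c x"
  shows "(\<integral>\<^sup>+x. f (x + c x *\<^sub>R axis k 1) \<partial>lborel) = integral\<^sup>N lborel f"
proof -
  have upd: "(\<chi> i. (x(k := y)) i) = (\<chi> i. (x(k := 0)) i) + y *\<^sub>R axis k 1" for x :: "'n \<Rightarrow> real" and y
    by (auto simp: vec_eq_iff axis_def)
  have line: "(\<integral>\<^sup>+y. f ((\<chi> i. (x(k := y)) i) + c (\<chi> i. (x(k := y)) i) *\<^sub>R axis k 1) \<partial>lborel)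
      = (\<integral>\<^sup>+y. f (\<chi> i. (x(k := y)) i) \<partial>lborel)" for x :: "'n \<Rightarrow> real"
  proof -
    define c0 where "c0 = c (\<chi> i. (x(k := 0)) i)"
    have "(\<chi> i. (x(k := y)) i) + c (\<chi> i. (x(k := y)) i) *\<^sub>R axis k 1 = (\<chi> i. (x(k := c0 + 1 * y)) i)" for y
      unfolding c0_def by (subst (1 2 3) upd) (simp add: c_invariant algebra_simps)
    moreover have [measurable]: "(\<lambda>y. f (\<chi> i. (x(k := y)) i)) \<in> borel_measurable borel"
      by (subst upd) measurable
    ultimately show ?thesis
      by (simp only:) (subst nn_integral_real_affine[where c=1 and t=c0]; simp)
  qed
  have "(\<integral>\<^sup>+x. f (x + c x *\<^sub>R axis k 1) \<partial>lborel) = (\<integral>\<^sup>+x. (\<integral>\<^sup>+y.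
      f ((\<chi> i. (x(k := y)) i) + c (\<chi> i. (x(k := y)) i) *\<^sub>R axis k 1) \<partial>lborel) \<partial>PiM (UNIV - {k}) (\<lambda>_. lborel))"
    by (rule nn_integral_lborel_vec_coordinate) measurable
  also have "\<dots> = (\<integral>\<^sup>+x. (\<integral>\<^sup>+y. f (\<chi> i. (x(k := y)) i) \<partial>lborel) \<partial>PiM (UNIV - {k}) (\<lambda>_. lborel))"
    by (simp only: line)
  also have "\<dots> = integral\<^sup>N lborel f"
    by (rule nn_integral_lborel_vec_coordinate[symmetric]) simp
  finally show ?thesis .
qed

lemma nn_integral_add_coordinate_multiple:
  fixes f :: "real^'n::finite \<Rightarrow> ennreal"
  assumes [measurable]: "f \<in> borel_measurable borel" and "u $ k = 0"
  shows "(\<integral>\<^sup>+x. f (x + (x$k) *\<^sub>R u) \<partial>lborel) = integral\<^sup>N lborel f"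
proof -
  have sum_case: "(\<integral>\<^sup>+x. f (x + (x$k) *\<^sub>R (\<Sum>j\<in>J. u$j *\<^sub>R axis j 1)) \<partial>lborel) = integral\<^sup>N lborel f"
    if "finite J" "k \<notin> J" "f \<in> borel_measurable borel" for J and f :: "real^'n \<Rightarrow> ennreal"
    using that
  proof (induction J arbitrary: f rule: finite_induct)
    case (insert j J)
    note [measurable] = \<open>f \<in> borel_measurable borel\<close>
    define g where "g = (\<lambda>y::real^'n. f (y + (y$k) *\<^sub>R (\<Sum>i\<in>J. u$i *\<^sub>R axis i 1)))"
    have [measurable]: "g \<in> borel_measurable borel"
      unfolding g_def using insert.prems by measurable
    have "j \<noteq> k"
      using insert.prems by auto
    then have "f (x + (x$k) *\<^sub>R (\<Sum>i\<in>insert j J. u$i *\<^sub>R axis i 1)) = g (x + (x$k * u$j) *\<^sub>R axis j 1)" for x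
      using insert.hyps by (simp add: g_def scaleR_add_right algebra_simps axis_def)
    then have "(\<integral>\<^sup>+x. f (x + (x$k) *\<^sub>R (\<Sum>i\<in>insert j J. u$i *\<^sub>R axis i 1)) \<partial>lborel)
        = (\<integral>\<^sup>+x. g (x + (x$k * u$j) *\<^sub>R axis j 1) \<partial>lborel)"
      by simp
    also have "\<dots> = integral\<^sup>N lborel g"
      using \<open>j \<noteq> k\<close> by (intro nn_integral_shear) (auto simp: axis_def)
    also have "\<dots> = integral\<^sup>N lborel f"
      using insert by (simp add: g_def)
    finally show ?case .
  qed simp
  have "(\<Sum>j\<in>UNIV - {k}. u$j *\<^sub>R axis j 1) = u"
    using basis_expansion[of u] \<open>u $ k = 0\<close>
    by (simp add: scalar_mult_eq_scaleR sum.mono_neutral_left[of UNIV "UNIV - {k}"])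
  with sum_case[of "UNIV - {k}" f] show ?thesis
    using assms(1) by simp
qed

lemma nn_integral_translation_invariant_infinite:
  fixes L :: "real^'n::finite \<Rightarrow> real" and d :: "real^'n"
  assumes [measurable]: "L \<in> borel_measurable borel" and pos: "\<And>x. 0 < L x"
    and "d \<noteq> 0" and invariant: "\<And>x t. L (x + t *\<^sub>R d) = L x"
  shows "(\<integral>\<^sup>+x. ennreal (L x) \<partial>lborel) = \<infinity>"
proof -
  obtain k where dk: "d$k \<noteq> 0"
    using \<open>d \<noteq> 0\<close> by (auto simp: vec_eq_iff)
  \<comment> \<open>The shear \<open>x \<mapsto> x + x$k *\<^sub>R u\<close> maps lines parallel to \<open>axis k 1\<close> onto lines
    parallel to \<open>d\<close>.\<close>
  define u where "u = (1 / d$k) *\<^sub>R d - axis k 1"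
  have "u$k = 0"
    using dk by (simp add: u_def axis_def)
  have shear: "x + (x$k) *\<^sub>R u = (x - (x$k) *\<^sub>R axis k 1) + (x$k / d$k) *\<^sub>R d" for x
    by (simp add: u_def algebra_simps)
  have "(\<integral>\<^sup>+x. ennreal (L x) \<partial>lborel) = (\<integral>\<^sup>+x. ennreal (L (x + (x$k) *\<^sub>R u)) \<partial>lborel)"
    by (rule nn_integral_add_coordinate_multiple[symmetric]) (simp_all add: \<open>u$k = 0\<close>)
  also have "\<dots> = (\<integral>\<^sup>+x. ennreal (L (x - (x$k) *\<^sub>R axis k 1)) \<partial>lborel)"
    by (simp only: shear invariant)
  also have "\<dots> = (\<integral>\<^sup>+x. (\<integral>\<^sup>+y. ennreal (L ((\<chi> i. (x(k := y)) i) - ((\<chi> i. (x(k := y)) i)$k) *\<^sub>R axis k 1))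
      \<partial>lborel) \<partial>PiM (UNIV - {k}) (\<lambda>_. lborel))"
    by (rule nn_integral_lborel_vec_coordinate) measurable
  also have "\<dots> = (\<integral>\<^sup>+x. (\<integral>\<^sup>+y. ennreal (L (\<chi> i. (x(k := 0)) i)) \<partial>(lborel :: real measure))
      \<partial>PiM (UNIV - {k}) (\<lambda>_. lborel))"
  proof -
    have "(\<chi> i. (x(k := y)) i) - ((\<chi> i. (x(k := y)) i)$k) *\<^sub>R axis k 1 = (\<chi> i. (x(k := 0)) i)" for x y
      by (auto simp: vec_eq_iff axis_def)
    then show ?thesis
      by (simp only:)
  qed
  also have "\<dots> = (\<integral>\<^sup>+x. \<infinity> \<partial>PiM (UNIV - {k}) (\<lambda>_. lborel :: real measure))"
    using pos by (intro nn_integral_cong) (simp add: emeasure_lborel_UNIV ennreal_mult_top less_imp_neq[symmetric])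
  also have "\<dots> = \<infinity>"
  proof -
    interpret product_sigma_finite "\<lambda>_::'n. lborel::real measure"
      by (rule product_sigma_finite_lborel)
    have "emeasure (PiM (UNIV - {k}) (\<lambda>_::'n. lborel::real measure)) (PiE (UNIV - {k}) (\<lambda>_. UNIV)) \<noteq> 0"
      by (subst emeasure_PiM) (auto simp: emeasure_lborel_UNIV top_power_ennreal)
    then show ?thesis
      by (simp add: nn_integral_const space_PiM ennreal_top_mult_left mult.commute)
  qed
  finally show ?thesis .
qed

section \<open>Gaussian integrals\<close>

lemma inner_transpose_matrix_vector: "x \<bullet> (transpose E *v y) = (E *v x) \<bullet> (y::real^'n)"
  by (simp add: transpose_matrix_vector inner_commute[of x] dot_lmul_matrix inner_commute[of y])

lemma matrix_inv_mult_self: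
  fixes A :: "real^'n^'n"
  assumes "det A \<noteq> 0"
  shows "matrix_inv A ** A = mat 1"
proof -
  have "\<exists>A'. A ** A' = mat 1 \<and> A' ** A = mat 1"
    using assms by (simp add: invertible_det_nz[symmetric] invertible_def)
  then show ?thesis
    unfolding matrix_inv_def by (rule someI2_ex) simp
qed

lemma matrix_inv_solve:
  fixes S :: "real^'n^'n"
  assumes "det S \<noteq> 0" and "M *v x + y = S *v b"
  shows "(matrix_inv S ** M) *v x + matrix_inv S *v y = b"
proof -
  have "(matrix_inv S ** M) *v x + matrix_inv S *v y = (matrix_inv S ** S) *v b"
    by (simp only: matrix_vector_mul_assoc[symmetric] matrix_vector_right_distrib[symmetric] assms(2))
  then show ?thesis
    using matrix_inv_mult_self[OF assms(1)] by simp
qed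

lemma matrix_vector_mult_borel [measurable]:
  "(\<lambda>x::real^'n::finite. N *v x) \<in> borel_measurable borel"
  by (intro borel_measurable_continuous_onI linear_continuous_on matrix_vector_mul_bounded_linear)

lemma pos_def_mat_symmetric: "pos_def_mat N \<Longrightarrow> N$i$j = N$j$i"
  unfolding pos_def_mat_def by (metis transpose_def vec_lambda_beta)

lemma pos_def_mat_diag_pos:
  assumes "pos_def_mat N"
  shows "0 < N$i$i"
proof -
  have "axis i 1 \<bullet> (N *v axis i 1) = N$i$i"
    by (simp add: inner_axis' matrix_vector_mult_basis column_def)
  moreover have "axis i (1::real) \<noteq> 0"
    by (simp add: axis_eq_0_iff)
  ultimately show ?thesis
    using assms unfolding pos_def_mat_def by metis
qed

lemma real_sqrt_prod: "finite A \<Longrightarrow> sqrt (prod f A) = (\<Prod>i\<in>A. sqrt (f i))"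
  by (induction A rule: finite_induct) (auto simp: real_sqrt_mult)

definition gaussian_mass :: "real^'n^'n \<Rightarrow> ennreal" where
  "gaussian_mass S = (\<integral>\<^sup>+x. ennreal (exp (- (x \<bullet> (S *v x)) / 2)) \<partial>lborel)"

lemma nn_integral_exp_neg_square:
  assumes "0 < a"
  shows "(\<integral>\<^sup>+t. ennreal (exp (- (a * t\<^sup>2 / 2))) \<partial>lborel) = ennreal (sqrt (2 * pi / a))"
proof -
  define s where "s = 1 / sqrt a"
  have "0 < s"
    using assms by (simp add: s_def)
  have "exp (- (a * t\<^sup>2 / 2)) = sqrt (2 * pi / a) * normal_density 0 s t" for t
    using assms by (simp add: normal_density_def s_def real_sqrt_divide real_sqrt_mult field_simps
        power2_eq_square)
  then have "(\<integral>\<^sup>+t. ennreal (exp (- (a * t\<^sup>2 / 2))) \<partial>lborel)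
      = ennreal (sqrt (2 * pi / a)) * (\<integral>\<^sup>+t. ennreal (normal_density 0 s t) \<partial>lborel)"
    using assms by (simp add: ennreal_mult nn_integral_cmult)
  also have "(\<integral>\<^sup>+t. ennreal (normal_density 0 s t) \<partial>lborel) = 1"
    using \<open>0 < s\<close> by (subst nn_integral_eq_integral) auto
  finally show ?thesis
    by simp
qed

lemma quadratic_form_diagonal:
  fixes N :: "real^'n^'n"
  assumes "\<And>i j. i \<noteq> j \<Longrightarrow> N$i$j = 0"
  shows "x \<bullet> (N *v x) = (\<Sum>i\<in>UNIV. N$i$i * (x$i)\<^sup>2)"
proof -
  have "(N *v x)$i = N$i$i * x$i" for i
  proof -
    have "(\<Sum>j\<in>UNIV. N$i$j * x$j) = (\<Sum>j\<in>UNIV. if j = i then N$i$i * x$i else 0)"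
      by (rule sum.cong) (auto simp: assms)
    then show ?thesis
      by (simp add: matrix_vector_mult_def)
  qed
  then show ?thesis
    by (simp add: inner_vec_def power2_eq_square mult_ac)
qed

lemma gaussian_mass_diagonal:
  fixes N :: "real^'n^'n"
  assumes off: "\<And>i j. i \<noteq> j \<Longrightarrow> N$i$j = 0" and pos: "\<And>i. 0 < N$i$i"
  shows "gaussian_mass N = ennreal ((2 * pi) powr (real CARD('n) / 2) / sqrt (det N))"
proof -
  have "- (x \<bullet> (N *v x)) / 2 = (\<Sum>i\<in>UNIV. - (N$i$i * (x$i)\<^sup>2) / 2)" for x
    by (simp add: quadratic_form_diagonal[OF off] sum_divide_distrib sum_negf)
  then have "ennreal (exp (- (x \<bullet> (N *v x)) / 2)) = (\<Prod>i\<in>UNIV. ennreal (exp (- (N$i$i * (x$i)\<^sup>2) / 2)))" for x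
    by (simp add: exp_sum prod_ennreal)
  then have "gaussian_mass N
      = (\<integral>\<^sup>+x. (\<Prod>i\<in>UNIV. ennreal (exp (- (N$i$i * (x$i)\<^sup>2) / 2))) \<partial>lborel)"
    unfolding gaussian_mass_def by simp
  also have "\<dots> = (\<Prod>i\<in>UNIV. ennreal (sqrt (2 * pi / N$i$i)))"
    by (subst nn_integral_prod_vec_nth) (auto simp: nn_integral_exp_neg_square pos)
  also have "\<dots> = ennreal (sqrt (\<Prod>i\<in>UNIV. 2 * pi / N$i$i))"
    using pos by (simp add: prod_ennreal less_imp_le real_sqrt_prod)
  also have "(\<Prod>i\<in>UNIV. 2 * pi / N$i$i) = (2 * pi) ^ CARD('n) / det N"
    by (simp add: det_diagonal[OF off] prod_dividef)
  also have "sqrt ((2 * pi) ^ CARD('n) / det N) = (2 * pi) powr (real CARD('n) / 2) / sqrt (det N)"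
  proof -
    have "sqrt ((2 * pi) ^ CARD('n)) = ((2 * pi) powr real CARD('n)) powr (1/2)"
      by (subst powr_realpow) (auto simp: powr_half_sqrt)
    then show ?thesis
      by (simp add: real_sqrt_divide powr_powr)
  qed
  finally show ?thesis .
qed

definition shear_mat :: "'n \<Rightarrow> real^'n \<Rightarrow> real^'n^'n::finite" where
  "shear_mat k w = (\<chi> i j. (if i = j then 1 else 0) + (if i = k then w$j else 0))"

lemma shear_mat_mult_left_nth: "(transpose (shear_mat k w) ** M)$i$j = M$i$j + w$i * M$k$j"
proof -
  have "(transpose (shear_mat k w) ** M)$i$j
      = (\<Sum>l\<in>UNIV. (if l = i then M$l$j else 0) + (if l = k then w$i * M$l$j else 0))"
    unfolding matrix_matrix_mult_def transpose_def shear_mat_def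
    by (auto intro!: sum.cong simp: distrib_right)
  then show ?thesis
    by (simp add: sum.distrib)
qed

lemma shear_mat_mult_right_nth: "(A ** shear_mat k w)$i$j = A$i$j + A$i$k * w$j"
proof -
  have "(A ** shear_mat k w)$i$j = (\<Sum>l\<in>UNIV. (if l = j then A$i$l else 0) + (if l = k then A$i$l * w$j else 0))"
    unfolding matrix_matrix_mult_def shear_mat_def
    by (auto intro!: sum.cong simp: distrib_left)
  then show ?thesis
    by (simp add: sum.distrib)
qed

lemma shear_mat_mult_vec: "shear_mat k w *v x = x + (w \<bullet> x) *\<^sub>R axis k 1"
proof -
  have "(shear_mat k w *v x)$j = (\<Sum>l\<in>UNIV. (if l = j then x$l else 0) + (if j = k then w$l * x$l else 0))" for j
    unfolding matrix_vector_mult_def shear_mat_def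
    by (auto intro!: sum.cong simp: distrib_right)
  also have "\<dots> j = (x + (w \<bullet> x) *\<^sub>R axis k 1)$j" for j
    by (simp add: sum.distrib inner_vec_def axis_def)
  finally show ?thesis
    by (simp add: vec_eq_iff)
qed

lemma det_shear_mat:
  fixes w :: "real^'n::finite"
  assumes "w$k = 0"
  shows "det (shear_mat k w) = 1"
proof -
  have "w = (\<Sum>j\<in>UNIV - {k}. w$j *s row j (mat 1 :: real^'n^'n))"
  proof -
    have "w = (\<Sum>j\<in>UNIV. w$j *s axis j 1)"
      using basis_expansion[of w] by simp
    also have "\<dots> = (\<Sum>j\<in>UNIV - {k}. w$j *s axis j 1)"
      using assms by (intro sum.mono_neutral_right) auto
    also have "\<dots> = (\<Sum>j\<in>UNIV - {k}. w$j *s row j (mat 1 :: real^'n^'n))"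
      by (intro sum.cong) (auto simp: row_def mat_def axis_def vec_eq_iff)
    finally show ?thesis .
  qed
  also have "\<dots> \<in> vec.span {row j (mat 1 :: real^'n^'n) |j. j \<noteq> k}"
    by (intro vec.span_sum vec.span_scale vec.span_base) blast
  finally have "w \<in> vec.span {row j (mat 1 :: real^'n^'n) |j. j \<noteq> k}" .
  moreover have "shear_mat k w = (\<chi> i. if i = k then row k (mat 1) + w else row i (mat 1))"
    by (auto simp: shear_mat_def vec_eq_iff row_def mat_def)
  ultimately show ?thesis
    using det_row_span[of w "mat 1 :: real^'n^'n" k] by simp
qed

lemma shear_mat_congruence_quadratic_form:
  "x \<bullet> ((transpose (shear_mat k w) ** M ** shear_mat k w) *v x)
    = (shear_mat k w *v x) \<bullet> (M *v (shear_mat k w *v x))"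
  by (simp only: matrix_vector_mul_assoc[symmetric] inner_transpose_matrix_vector)

lemma gaussian_mass_shear_congruence:
  fixes M :: "real^'n^'n"
  assumes "w$k = 0"
  shows "gaussian_mass (transpose (shear_mat k w) ** M ** shear_mat k w) = gaussian_mass M"
proof -
  define g where "g = (\<lambda>y::real^'n. ennreal (exp (- (y \<bullet> (M *v y)) / 2)))"
  have [measurable]: "g \<in> borel_measurable borel"
    unfolding g_def by measurable
  have "gaussian_mass (transpose (shear_mat k w) ** M ** shear_mat k w)
      = (\<integral>\<^sup>+x. g (x + (w \<bullet> x) *\<^sub>R axis k 1) \<partial>lborel)"
    by (simp add: gaussian_mass_def shear_mat_congruence_quadratic_form g_def shear_mat_mult_vec)
  also have "\<dots> = integral\<^sup>N lborel g"
    using assms by (intro nn_integral_shear) (auto simp: inner_add_right inner_axis)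
  finally show ?thesis
    by (simp add: gaussian_mass_def g_def)
qed

lemma pos_def_mat_of_shear_congruence:
  fixes M :: "real^'n^'n"
  assumes "w$k = 0" and "transpose M = M"
    and pd: "pos_def_mat (transpose (shear_mat k w) ** M ** shear_mat k w)"
  shows "pos_def_mat M"
  unfolding pos_def_mat_def
proof (intro conjI allI impI)
  fix y :: "real^'n"
  assume "y \<noteq> 0"
  define x where "x = y - (w \<bullet> y) *\<^sub>R axis k 1"
  have "shear_mat k w *v x = y"
    using assms(1) by (simp add: shear_mat_mult_vec x_def inner_diff_right inner_axis)
  then have "x \<noteq> 0"
    using \<open>y \<noteq> 0\<close> by auto
  then have "0 < (shear_mat k w *v x) \<bullet> (M *v (shear_mat k w *v x))"
    using pd by (simp add: pos_def_mat_def shear_mat_congruence_quadratic_form)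
  then show "0 < y \<bullet> (M *v y)"
    using \<open>shear_mat k w *v x = y\<close> by simp
qed (rule assms(2))

lemma gaussian_elimination_step:
  fixes N :: "real^'n^'n"
  assumes pd: "pos_def_mat N"
  obtains N' where "pos_def_mat N'" "det N' = det N" "gaussian_mass N' = gaussian_mass N"
    "\<And>i. i \<noteq> k \<Longrightarrow> N'$i$k = 0 \<and> N'$k$i = 0"
    "\<And>i j. i \<noteq> k \<Longrightarrow> j \<noteq> k \<Longrightarrow> N'$i$j = N$i$j - N$i$k * N$k$j / N$k$k"
proof -
  define a where "a = N$k$k"
  have "0 < a"
    unfolding a_def using pd by (rule pos_def_mat_diag_pos)
  define w :: "real^'n" where "w = (\<chi> j. if j = k then 0 else N$k$j / a)"
  define N' :: "real^'n^'n" where "N' = (\<chi> i j. if i = k \<and> j = k then a else if i = k \<or> j = k then 0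
      else N$i$j - N$i$k * N$k$j / a)"
  have "w$k = 0"
    by (simp add: w_def)
  have sym: "N$i$j = N$j$i" for i j
    using pd by (rule pos_def_mat_symmetric)
  have N_eq: "N = transpose (shear_mat k w) ** N' ** shear_mat k w"
    unfolding vec_eq_iff shear_mat_mult_right_nth shear_mat_mult_left_nth
    using \<open>0 < a\<close> by (auto simp: N'_def w_def a_def field_simps sym)
  have "transpose N' = N'"
    unfolding vec_eq_iff transpose_def N'_def by (auto simp: sym mult_ac)
  then have "pos_def_mat N'"
    using pos_def_mat_of_shear_congruence[OF \<open>w$k = 0\<close>] pd N_eq by simp
  moreover have "det N' = det N"
    using det_shear_mat[OF \<open>w$k = 0\<close>] N_eq by (simp add: det_mul det_transpose)
  moreover have "gaussian_mass N' = gaussian_mass N"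
    using gaussian_mass_shear_congruence[OF \<open>w$k = 0\<close>] N_eq by simp
  ultimately show ?thesis
    by (rule that) (auto simp: N'_def a_def)
qed

lemma
  fixes S :: "real^'n^'n"
  assumes "pos_def_mat S"
  shows det_pos_if_pos_def_mat: "0 < det S"
    and gaussian_mass_pos_def_mat:
      "gaussian_mass S = ennreal ((2 * pi) powr (real CARD('n) / 2) / sqrt (det S))"
proof -
  \<comment> \<open>Induction over the set \<open>K\<close> of coordinates outside of which \<open>N\<close> is already diagonal.\<close>
  have "0 < det N \<and> gaussian_mass N = ennreal ((2 * pi) powr (real CARD('n) / 2) / sqrt (det N))"
    if "pos_def_mat N" "\<And>i j. i \<noteq> j \<Longrightarrow> i \<notin> K \<or> j \<notin> K \<Longrightarrow> N$i$j = 0" for K and N :: "real^'n^'n"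
    using finite[of K] that
  proof (induction K arbitrary: N rule: finite_induct)
    case empty
    then have off: "\<And>i j. i \<noteq> j \<Longrightarrow> N$i$j = 0"
      by blast
    have pos: "\<And>i. 0 < N$i$i"
      using empty.prems(1) by (rule pos_def_mat_diag_pos)
    show ?case
      by (simp add: gaussian_mass_diagonal[OF off pos] det_diagonal[OF off] prod_pos pos)
  next
    case (insert k K)
    obtain N' where "pos_def_mat N'" "det N' = det N" "gaussian_mass N' = gaussian_mass N"
      and cleared: "\<And>i. i \<noteq> k \<Longrightarrow> N'$i$k = 0 \<and> N'$k$i = 0"
      and schur: "\<And>i j. i \<noteq> k \<Longrightarrow> j \<noteq> k \<Longrightarrow> N'$i$j = N$i$j - N$i$k * N$k$j / N$k$k"
      using gaussian_elimination_step[OF insert.prems(1), of k] by blast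
    have "N'$i$j = 0" if "i \<noteq> j" "i \<notin> K \<or> j \<notin> K" for i j
    proof (cases "i = k \<or> j = k")
      case False
      have "N$i$j = 0" "N$i$k = 0 \<or> N$k$j = 0"
        using insert.prems(2) that False by (metis insert_iff)+
      then show ?thesis
        using schur False by auto
    qed (use that cleared in auto)
    with insert.IH[of N'] \<open>pos_def_mat N'\<close> show ?case
      by (simp add: \<open>det N' = det N\<close> \<open>gaussian_mass N' = gaussian_mass N\<close>)
  qed
  from this[OF assms, of UNIV] show "0 < det S"
    and "gaussian_mass S = ennreal ((2 * pi) powr (real CARD('n) / 2) / sqrt (det S))"
    by auto
qed

lemma pos_def_mat_quadratic_lower_bound:
  fixes S :: "real^'n^'n"
  assumes "pos_def_mat S"
  obtains l where "0 < l" "\<And>x. l * (norm x)\<^sup>2 \<le> x \<bullet> (S *v x)"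
proof -
  have cont: "continuous_on UNIV (\<lambda>x::real^'n. x \<bullet> (S *v x))"
    by (intro continuous_intros linear_continuous_on matrix_vector_mul_bounded_linear)
  have "sphere (0::real^'n) 1 \<noteq> {}"
    using vector_choose_size[of 1] by (auto simp: sphere_def)
  then obtain u where u: "u \<in> sphere (0::real^'n) 1"
    and min: "\<And>y. y \<in> sphere 0 1 \<Longrightarrow> u \<bullet> (S *v u) \<le> y \<bullet> (S *v y)"
    using continuous_attains_inf[OF compact_sphere _ continuous_on_subset[OF cont]] by blast
  have "u \<noteq> 0"
    using u by auto
  then have "0 < u \<bullet> (S *v u)"
    using assms by (simp add: pos_def_mat_def)
  moreover have "u \<bullet> (S *v u) * (norm x)\<^sup>2 \<le> x \<bullet> (S *v x)" for x
  proof (cases "x = 0")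
    case False
    define y where "y = (1 / norm x) *\<^sub>R x"
    have "y \<in> sphere 0 1" "x = norm x *\<^sub>R y"
      using False by (simp_all add: y_def)
    then have "x \<bullet> (S *v x) = (norm x)\<^sup>2 * (y \<bullet> (S *v y))"
      by (metis inner_scaleR_left inner_scaleR_right matrix_vector_mult_scaleR mult.assoc power2_eq_square)
    then show ?thesis
      using min[OF \<open>y \<in> sphere 0 1\<close>] by (simp add: mult.commute mult_right_mono)
  qed simp
  ultimately show ?thesis
    using that by blast
qed

lemma integrable_gaussian:
  fixes S :: "real^'n^'n"
  assumes "pos_def_mat S"
  shows "integrable lborel (\<lambda>x. exp (- (x \<bullet> (S *v x)) / 2))"
  using has_bochner_integral_nn_integral[OF _ _ _ gaussian_mass_pos_def_mat[OF assms, unfolded gaussian_mass_def]]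
    det_pos_if_pos_def_mat[OF assms]
  by (auto simp: has_bochner_integral_iff)

section \<open>Multivariate normal densities\<close>

lemma lborel_distr_uminus_euclidean: "distr lborel borel uminus = (lborel :: 'a::euclidean_space measure)"
  using lborel_affine[of "-1" "0::'a"] by (simp add: density_1)

lemma
  fixes f :: "'a::euclidean_space \<Rightarrow> 'b::{banach, second_countable_topology}"
  assumes [measurable]: "f \<in> borel_measurable borel"
  shows integral_lborel_translate: "integral\<^sup>L lborel f = (\<integral>x. f (m + x) \<partial>lborel)"
    and integrable_lborel_translate_iff: "integrable lborel f \<longleftrightarrow> integrable lborel (\<lambda>x. f (m + x))"
    and integral_lborel_reflect: "integral\<^sup>L lborel f = (\<integral>x. f (- x) \<partial>lborel)"
proof -
  show "integral\<^sup>L lborel f = (\<integral>x. f (m + x) \<partial>lborel)"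
    by (subst lborel_distr_plus[symmetric, of m]) (simp add: integral_distr)
  show "integrable lborel f \<longleftrightarrow> integrable lborel (\<lambda>x. f (m + x))"
    by (subst (1) lborel_distr_plus[symmetric, of m]) (simp add: integrable_distr_eq)
  show "integral\<^sup>L lborel f = (\<integral>x. f (- x) \<partial>lborel)"
    by (subst lborel_distr_uminus_euclidean[symmetric]) (simp add: integral_distr)
qed

lemma nn_integral_lborel_translate:
  fixes f :: "'a::euclidean_space \<Rightarrow> ennreal"
  assumes [measurable]: "f \<in> borel_measurable borel"
  shows "integral\<^sup>N lborel f = (\<integral>\<^sup>+x. f (m + x) \<partial>lborel)"
  by (subst lborel_distr_plus[symmetric, of m]) (simp add: nn_integral_distr)

lemma mvn_prec_density_measurable [measurable]: "mvn_prec_density m S \<in> borel_measurable borel"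
  unfolding mvn_prec_density_def[abs_def] by measurable

lemma mvn_prec_density_translate: "mvn_prec_density m S (m + u) = mvn_prec_density 0 S u"
  by (simp add: mvn_prec_density_def)

lemma mvn_prec_density_uminus: "mvn_prec_density 0 S (- u) = mvn_prec_density 0 S u"
proof -
  have "S *v (- u) = - (S *v u)"
    using matrix_vector_mult_scaleR[of S "-1" u] by simp
  then show ?thesis
    by (simp add: mvn_prec_density_def)
qed

lemma mult_exp_neg_square_le:
  fixes l t :: real
  assumes "0 < l" "0 \<le> t"
  shows "t * exp (- (l * t\<^sup>2 / 2)) \<le> (1 + 4 / l) * exp (- (l * t\<^sup>2 / 4))"
proof -
  have "t \<le> 1 + t\<^sup>2"
  proof (cases "t \<le> 1")
    case False
    then have "t * 1 \<le> t * t"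
      by (intro mult_left_mono) auto
    then show ?thesis
      by (simp add: power2_eq_square)
  qed (simp add: add_increasing2)
  also have "\<dots> \<le> (1 + 4 / l) * (1 + l * t\<^sup>2 / 4)"
    using assms by (simp add: field_simps)
  also have "\<dots> \<le> (1 + 4 / l) * exp (l * t\<^sup>2 / 4)"
    using assms exp_ge_add_one_self[of "l * t\<^sup>2 / 4"] by (intro mult_left_mono) auto
  finally have "t * exp (- (l * t\<^sup>2 / 2)) \<le> (1 + 4 / l) * exp (l * t\<^sup>2 / 4) * exp (- (l * t\<^sup>2 / 2))"
    by (rule mult_right_mono) simp
  then show ?thesis
    by (simp add: mult.assoc exp_add[symmetric])
qed

context
  fixes S :: "real^'n^'n"
  assumes pd: "pos_def_mat S"
begin

lemma mvn_prec_density_nonneg: "0 \<le> mvn_prec_density m S x"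
  using det_pos_if_pos_def_mat[OF pd] by (simp add: mvn_prec_density_def)

lemma mvn_prec_density_le: "mvn_prec_density m S x \<le> (2 * pi) powr (- real CARD('n) / 2) * sqrt (det S)"
proof -
  have "0 \<le> (x - m) \<bullet> (S *v (x - m))"
    using pd by (cases "x - m = 0") (auto simp: pos_def_mat_def less_imp_le)
  then show ?thesis
    unfolding mvn_prec_density_def using det_pos_if_pos_def_mat[OF pd] by (intro mult_left_le) auto
qed

lemma has_bochner_integral_mvn_prec_density: "has_bochner_integral lborel (mvn_prec_density m S) 1"
proof (rule has_bochner_integral_nn_integral)
  define c where "c = (2 * pi) powr (- real CARD('n) / 2) * sqrt (det S)"
  have "0 < det S"
    using pd by (rule det_pos_if_pos_def_mat)
  have "(\<integral>\<^sup>+x. ennreal (mvn_prec_density m S x) \<partial>lborel) = (\<integral>\<^sup>+x. ennreal (mvn_prec_density m S (m + x)) \<partial>lborel)"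
    by (rule nn_integral_lborel_translate) measurable
  also have "\<dots> = (\<integral>\<^sup>+x. ennreal c * ennreal (exp (- (x \<bullet> (S *v x)) / 2)) \<partial>lborel)"
    using \<open>0 < det S\<close> by (intro nn_integral_cong) (simp add: mvn_prec_density_def c_def ennreal_mult)
  also have "\<dots> = ennreal c * gaussian_mass S"
    unfolding gaussian_mass_def by (rule nn_integral_cmult) measurable
  also have "\<dots> = 1"
    using \<open>0 < det S\<close>
    by (simp add: gaussian_mass_pos_def_mat[OF pd] c_def ennreal_mult[symmetric] powr_minus field_simps)
  finally show "(\<integral>\<^sup>+x. ennreal (mvn_prec_density m S x) \<partial>lborel) = ennreal 1"
    by simp
qed (auto simp: mvn_prec_density_nonneg)

lemma integrable_mvn_prec_density: "integrable lborel (mvn_prec_density m S)"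
  and integral_mvn_prec_density: "(\<integral>x. mvn_prec_density m S x \<partial>lborel) = 1"
  using has_bochner_integral_mvn_prec_density by (auto simp: has_bochner_integral_iff)

lemma integrable_mvn_prec_density_centered_norm:
  "integrable lborel (\<lambda>x. mvn_prec_density 0 S x * norm x)"
proof -
  obtain l where "0 < l" and lower: "\<And>x. l * (norm x)\<^sup>2 \<le> x \<bullet> (S *v x)"
    using pos_def_mat_quadratic_lower_bound[OF pd] by blast
  define c where "c = (2 * pi) powr (- real CARD('n) / 2) * sqrt (det S)"
  have "0 \<le> c"
    using det_pos_if_pos_def_mat[OF pd] by (simp add: c_def)
  define S' where "S' = (l / 2) *\<^sub>R (mat 1 :: real^'n^'n)"
  have S'_quad: "x \<bullet> (S' *v x) = l / 2 * (norm x)\<^sup>2" for x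
    by (simp add: S'_def scaleR_matrix_vector_assoc[symmetric] power2_norm_eq_inner)
  have "pos_def_mat S'"
    unfolding pos_def_mat_def S'_quad
    using \<open>0 < l\<close> by (auto simp: S'_def transpose_def vec_eq_iff mat_def)
  show ?thesis
  proof (rule Bochner_Integration.integrable_bound)
    show "integrable lborel (\<lambda>x. c * (1 + 4 / l) * exp (- (x \<bullet> (S' *v x)) / 2))"
      using integrable_gaussian[OF \<open>pos_def_mat S'\<close>] by simp
    show "AE x in lborel. norm (mvn_prec_density 0 S x * norm x)
        \<le> norm (c * (1 + 4 / l) * exp (- (x \<bullet> (S' *v x)) / 2))"
    proof (rule AE_I2)
      fix x :: "real^'n"
      have "mvn_prec_density 0 S x * norm x = c * (norm x * exp (- (x \<bullet> (S *v x)) / 2))"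
        by (simp add: mvn_prec_density_def c_def mult_ac)
      also have "\<dots> \<le> c * (norm x * exp (- (l * (norm x)\<^sup>2 / 2)))"
        using lower[of x] \<open>0 \<le> c\<close> by (intro mult_left_mono) auto
      also have "\<dots> \<le> c * ((1 + 4 / l) * exp (- (l * (norm x)\<^sup>2 / 4)))"
        using \<open>0 < l\<close> \<open>0 \<le> c\<close> by (intro mult_left_mono mult_exp_neg_square_le) auto
      finally show "norm (mvn_prec_density 0 S x * norm x) \<le> norm (c * (1 + 4 / l) * exp (- (x \<bullet> (S' *v x)) / 2))"
        using \<open>0 < l\<close> \<open>0 \<le> c\<close> by (simp add: mvn_prec_density_nonneg S'_quad mult.assoc)
    qed
  qed measurable
qed

lemma
  shows integrable_mvn_prec_density_mean: "integrable lborel (\<lambda>x. mvn_prec_density m S x *\<^sub>R x)"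
    and integral_mvn_prec_density_mean: "(\<integral>x. mvn_prec_density m S x *\<^sub>R x \<partial>lborel) = m"
proof -
  let ?g = "mvn_prec_density 0 S"
  have centered: "integrable lborel (\<lambda>u. ?g u *\<^sub>R u)"
    using integrable_mvn_prec_density_centered_norm
    by (rule Bochner_Integration.integrable_bound) (auto simp: mvn_prec_density_nonneg)
  have const: "integrable lborel (\<lambda>u. ?g u *\<^sub>R m)"
    using integrable_mvn_prec_density by simp
  have shift: "mvn_prec_density m S (m + u) *\<^sub>R (m + u) = ?g u *\<^sub>R m + ?g u *\<^sub>R u" for u
    by (simp add: mvn_prec_density_translate scaleR_add_right)
  show "integrable lborel (\<lambda>x. mvn_prec_density m S x *\<^sub>R x)"
    by (subst integrable_lborel_translate_iff[of _ m]) (simp_all add: shift centered const)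
  have "(\<integral>u. ?g u *\<^sub>R u \<partial>lborel) = - (\<integral>u. ?g u *\<^sub>R u \<partial>lborel)"
    by (subst integral_lborel_reflect) (simp_all add: mvn_prec_density_uminus)
  then have odd: "(\<integral>u. ?g u *\<^sub>R u \<partial>lborel) = 0"
    by (simp add: eq_neg_iff_add_eq_0 scaleR_2[symmetric])
  have "(\<integral>x. mvn_prec_density m S x *\<^sub>R x \<partial>lborel) = (\<integral>u. ?g u *\<^sub>R m + ?g u *\<^sub>R u \<partial>lborel)"
    by (subst integral_lborel_translate[of _ m]) (simp_all add: shift)
  also have "\<dots> = m"
    using odd const centered integral_mvn_prec_density integrable_mvn_prec_density by simp
  finally show "(\<integral>x. mvn_prec_density m S x *\<^sub>R x \<partial>lborel) = m" .
qed

lemma integral_mvn_prec_density_norm_le: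
  "(\<integral>x. mvn_prec_density m S x * norm x \<partial>lborel)
    \<le> norm m + (\<integral>u. mvn_prec_density 0 S u * norm u \<partial>lborel)"
proof -
  let ?g = "mvn_prec_density 0 S"
  have bound: "integrable lborel (\<lambda>u. ?g u * norm m + ?g u * norm u)"
    using integrable_mvn_prec_density integrable_mvn_prec_density_centered_norm by auto
  have le: "?g u * norm (m + u) \<le> ?g u * norm m + ?g u * norm u" for u
    using mult_left_mono[OF norm_triangle_ineq[of m u] mvn_prec_density_nonneg] by (simp add: distrib_left)
  have shifted: "integrable lborel (\<lambda>u. ?g u * norm (m + u))"
    using bound by (rule Bochner_Integration.integrable_bound) (use le in \<open>auto simp: mvn_prec_density_nonneg\<close>)
  have "(\<integral>x. mvn_prec_density m S x * norm x \<partial>lborel) = (\<integral>u. ?g u * norm (m + u) \<partial>lborel)"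
    by (subst integral_lborel_translate[of _ m]) (simp_all add: mvn_prec_density_translate)
  also have "\<dots> \<le> (\<integral>u. ?g u * norm m + ?g u * norm u \<partial>lborel)"
    by (rule integral_mono[OF shifted bound le])
  also have "\<dots> = norm m + (\<integral>u. ?g u * norm u \<partial>lborel)"
    using integrable_mvn_prec_density integrable_mvn_prec_density_centered_norm integral_mvn_prec_density
    by simp
  finally show ?thesis .
qed

end

section \<open>The standard normal distribution function\<close>

lemma integrable_indicator_normal_density:
  "A \<in> sets borel \<Longrightarrow> integrable lborel (\<lambda>z. indicator A z * normal_density \<theta> 1 z)"
  using integrable_real_mult_indicator[of A lborel "normal_density \<theta> 1"] by (simp add: mult.commute)

lemma integrable_indicator_normal_moment:
  "A \<in> sets borel \<Longrightarrow> integrable lborel (\<lambda>z. indicator A z * (z * normal_density \<theta> 1 z))"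
  using integrable_real_mult_indicator[of A lborel "\<lambda>z. normal_density \<theta> 1 z * z"]
    integrable_normal_moment_nz_1[of 1 \<theta>]
  by (simp add: mult_ac)

lemma integral_split_at_zero:
  fixes h :: "real \<Rightarrow> real"
  assumes "integrable lborel h"
  shows "(\<integral>z. indicator {..<0} z * h z \<partial>lborel) + (\<integral>z. indicator {0<..} z * h z \<partial>lborel) = integral\<^sup>L lborel h"
proof -
  have "(\<integral>z. indicator {..<0} z * h z \<partial>lborel) + (\<integral>z. indicator {0<..} z * h z \<partial>lborel)
      = (\<integral>z. indicator {..<0} z * h z + indicator {0<..} z * h z \<partial>lborel)"
    using integrable_real_mult_indicator[OF _ assms, of "{..<0}"] integrable_real_mult_indicator[OF _ assms, of "{0<..}"]
    by (intro Bochner_Integration.integral_add[symmetric]) (auto simp: mult.commute)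
  also have "\<dots> = integral\<^sup>L lborel h"
  proof (rule integral_cong_AE)
    show "AE x in lborel. indicator {..<0} x * h x + indicator {0<..} x * h x = h x"
      using AE_lborel_singleton[of "0::real"] by eventually_elim (auto simp: indicator_def)
  qed (use assms in auto)
  finally show ?thesis .
qed

lemma Phi_eq_integral_Ioi: "Phi \<theta> = (\<integral>z. indicator {0<..} z * normal_density \<theta> 1 z \<partial>lborel)"
proof -
  have "Phi \<theta> = (\<integral>t. indicator {..\<theta>} t * std_normal_density t \<partial>lborel)"
    by (simp add: Phi_def set_lebesgue_integral_def)
  also have "\<dots> = (\<integral>x. indicator {..\<theta>} (\<theta> + (-1) * x) * std_normal_density (\<theta> + (-1) * x) \<partial>lborel)"
    using lborel_integral_real_affine[of "-1"] by simp
  also have "\<dots> = (\<integral>z. indicator {0..} z * normal_density \<theta> 1 z \<partial>lborel)"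
    by (intro Bochner_Integration.integral_cong) (auto simp: indicator_def normal_density_def power2_commute)
  also have "\<dots> = (\<integral>z. indicator {0<..} z * normal_density \<theta> 1 z \<partial>lborel)"
  proof (rule integral_cong_AE)
    show "AE x in lborel. indicator {0..} x * normal_density \<theta> 1 x = indicator {0<..} x * normal_density \<theta> 1 x"
      using AE_lborel_singleton[of "0::real"] by eventually_elim (auto simp: indicator_def)
  qed auto
  finally show ?thesis .
qed

lemma one_minus_Phi_eq_integral_Iio:
  "1 - Phi \<theta> = (\<integral>z. indicator {..<0} z * normal_density \<theta> 1 z \<partial>lborel)"
  using integral_split_at_zero[OF integrable_normal_density[of 1 \<theta>]] by (simp add: Phi_eq_integral_Ioi)

lemma integral_indicator_normal_density_pos:
  fixes a b :: real
  assumes "a < b" and "{a<..<b} \<subseteq> A" and "A \<in> sets borel"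
  shows "0 < (\<integral>z. indicator A z * normal_density \<theta> 1 z \<partial>lborel)"
proof -
  define R where "R = \<bar>a\<bar> + \<bar>b\<bar> + \<bar>\<theta>\<bar>"
  define c where "c = 1 / sqrt (2 * pi) * exp (- (R * R) / 2)"
  have "0 < c"
    by (simp add: c_def)
  have "indicator {a<..<b} z * c \<le> indicator A z * normal_density \<theta> 1 z" for z
  proof (cases "z \<in> {a<..<b}")
    case True
    then have "\<bar>z - \<theta>\<bar> \<le> R"
      by (auto simp: R_def)
    then have "(z - \<theta>)\<^sup>2 \<le> R * R"
      by (metis abs_le_square_iff abs_of_nonneg abs_ge_zero order_trans R_def abs_abs power2_eq_square)
    then have "c \<le> normal_density \<theta> 1 z"
      unfolding c_def normal_density_def by (simp add: divide_right_mono)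
    moreover have "z \<in> A"
      using True assms(2) by auto
    ultimately show ?thesis
      using True by (simp add: indicator_def)
  qed (auto simp: indicator_def)
  then have "(\<integral>z. indicator {a<..<b} z * c \<partial>lborel) \<le> (\<integral>z. indicator A z * normal_density \<theta> 1 z \<partial>lborel)"
    using assms by (intro integral_mono integrable_indicator_normal_density integrable_real_mult_indicator) auto
  moreover have "(\<integral>z. indicator {a<..<b} z * c \<partial>lborel) = c * (b - a)"
    using assms(1) by (simp add: mult.commute)
  moreover have "0 < c * (b - a)"
    using assms(1) \<open>0 < c\<close> by simp
  ultimately show ?thesis
    by linarith
qed

lemma Phi_pos: "0 < Phi \<theta>"
  unfolding Phi_eq_integral_Ioi by (rule integral_indicator_normal_density_pos[of 0 1]) auto

lemma Phi_less_one: "Phi \<theta> < 1"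
proof -
  have "0 < 1 - Phi \<theta>"
    unfolding one_minus_Phi_eq_integral_Iio by (rule integral_indicator_normal_density_pos[of "-1" 0]) auto
  then show ?thesis
    by simp
qed

lemma integral_Ioi_std_normal_first_moment:
  "(\<integral>u. indicator {a<..} u * (u * std_normal_density u) \<partial>lborel) = std_normal_density a"
proof -
  let ?F = "\<lambda>u. - std_normal_density u"
  let ?f = "\<lambda>u. u * std_normal_density u"
  have "(LBINT x=ereal a..\<infinity>. ?f x) = 0 - ?F a"
  proof (rule interval_integral_FTC_integrable)
    show "(?F has_vector_derivative ?f x) (at x)" for x
      unfolding std_normal_density_def has_real_derivative_iff_has_vector_derivative[symmetric]
      by (auto intro!: derivative_eq_intros simp: field_simps power2_eq_square)
    show "isCont ?f x" for x
      unfolding std_normal_density_def by (intro continuous_intros) simp_all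
    show "set_integrable lborel (einterval (ereal a) \<infinity>) ?f"
      unfolding set_integrable_def
      using integrable_real_mult_indicator[of "einterval (ereal a) \<infinity>" lborel "\<lambda>x. std_normal_density x * x^1"]
        integrable_std_normal_moment[of 1]
      by (simp add: mult_ac)
    have "(?F \<longlongrightarrow> ?F a) (at a)"
      unfolding std_normal_density_def by (intro tendsto_intros) simp_all
    then show "((?F \<circ> real_of_ereal) \<longlongrightarrow> ?F a) (at_right (ereal a))"
      by (simp add: ereal_tendsto_simps filterlim_at_split)
    have "(?F \<longlongrightarrow> 0) at_top"
      unfolding std_normal_density_def by real_asymp
    then show "((?F \<circ> real_of_ereal) \<longlongrightarrow> 0) (at_left \<infinity>)"
      by (simp add: ereal_tendsto_simps)
  qed simp
  then show ?thesis
    by (simp add: interval_integral_to_infinity_eq set_lebesgue_integral_def)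
qed

lemma integral_Ioi_normal_first_moment:
  "(\<integral>z. indicator {0<..} z * (z * normal_density \<theta> 1 z) \<partial>lborel) = \<theta> * Phi \<theta> + std_normal_density \<theta>"
proof -
  have centered: "integrable lborel (\<lambda>z. indicator {0<..} z * ((z - \<theta>) * normal_density \<theta> 1 z))"
    using integrable_real_mult_indicator[of "{0<..}" lborel "\<lambda>z. normal_density \<theta> 1 z * (z - \<theta>)^1"]
      integrable_normal_moment[of 1 \<theta> 1]
    by (simp add: mult_ac)
  have "(\<integral>z. indicator {0<..} z * (z * normal_density \<theta> 1 z) \<partial>lborel)
     = (\<integral>z. indicator {0<..} z * normal_density \<theta> 1 z * \<theta>
          + indicator {0<..} z * ((z - \<theta>) * normal_density \<theta> 1 z) \<partial>lborel)"
    by (intro Bochner_Integration.integral_cong) (auto simp: algebra_simps)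
  also have "\<dots> = \<theta> * Phi \<theta> + (\<integral>z. indicator {0<..} z * ((z - \<theta>) * normal_density \<theta> 1 z) \<partial>lborel)"
    using integrable_indicator_normal_density[of "{0<..}" \<theta>] centered
    by (simp add: Phi_eq_integral_Ioi)
  also have "(\<integral>z. indicator {0<..} z * ((z - \<theta>) * normal_density \<theta> 1 z) \<partial>lborel)
     = (\<integral>u. indicator {0<..} (\<theta> + 1 * u) * ((\<theta> + 1 * u - \<theta>) * normal_density \<theta> 1 (\<theta> + 1 * u)) \<partial>lborel)"
    using lborel_integral_real_affine[where c=1 and t=\<theta>
        and f="\<lambda>z. indicator {0<..} z * ((z - \<theta>) * normal_density \<theta> 1 z)"]
    by simp
  also have "\<dots> = (\<integral>u. indicator {-\<theta><..} u * (u * std_normal_density u) \<partial>lborel)"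
    by (intro Bochner_Integration.integral_cong) (auto simp: indicator_def normal_density_def)
  also have "\<dots> = std_normal_density \<theta>"
    using integral_Ioi_std_normal_first_moment[of "-\<theta>"] by (simp add: normal_density_def)
  finally show ?thesis .
qed

lemma integral_Iio_normal_first_moment:
  "(\<integral>z. indicator {..<0} z * (z * normal_density \<theta> 1 z) \<partial>lborel) = \<theta> * (1 - Phi \<theta>) - std_normal_density \<theta>"
  using integral_split_at_zero[OF integrable_normal_moment_nz_1[of 1 \<theta>]] integral_normal_moment_nz_1[of 1 \<theta>]
    integral_Ioi_normal_first_moment[of \<theta>]
  by (simp add: mult_ac algebra_simps)

lemma Phi_eq_add_interval_integral: "Phi u = Phi x + (LBINT t=ereal x..ereal u. std_normal_density t)"
proof -
  have Phi_add: "Phi b = Phi a + (\<integral>t. indicator {a<..<b} t * std_normal_density t \<partial>lborel)"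
    if "a \<le> b" for a b
  proof -
    have "Phi b = (\<integral>t. indicator {..a} t * std_normal_density t + indicator {a<..<b} t * std_normal_density t \<partial>lborel)"
      unfolding Phi_def set_lebesgue_integral_def
    proof (rule integral_cong_AE)
      show "AE x in lborel. indicator {..b} x *\<^sub>R std_normal_density x
          = indicator {..a} x * std_normal_density x + indicator {a<..<b} x * std_normal_density x"
        using AE_lborel_singleton[of b] by eventually_elim (use that in \<open>auto simp: indicator_def\<close>)
    qed auto
    then show ?thesis
      using integrable_indicator_normal_density[of _ 0]
      by (simp add: Phi_def set_lebesgue_integral_def)
  qed
  show ?thesis
  proof (cases "x \<le> u")
    case True
    then show ?thesis
      by (simp add: Phi_add[OF True] interval_integral_Ioo set_lebesgue_integral_def)
  next
    case False
    then show ?thesis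
      using interval_integral_endpoints_reverse[of x u std_normal_density]
      by (simp add: Phi_add[of u x] interval_integral_Ioo[of u x] set_lebesgue_integral_def)
  qed
qed

lemma DERIV_Phi: "(Phi has_real_derivative std_normal_density x) (at x)"
proof -
  let ?G = "\<lambda>u. LBINT t=ereal x..ereal u. std_normal_density t"
  have "continuous_on {x-1..x+1} std_normal_density"
    unfolding std_normal_density_def by (intro continuous_intros) simp_all
  then have "(?G has_vector_derivative std_normal_density x) (at x within {x-1..x+1})"
    by (intro interval_integral_FTC2) auto
  then have "(?G has_vector_derivative std_normal_density x) (at x within {x-1<..<x+1})"
    by (rule has_vector_derivative_within_subset) auto
  then have "(?G has_vector_derivative std_normal_density x) (at x)"
    by (subst (asm) has_vector_derivative_within_open) auto
  then have "((\<lambda>u. Phi x + ?G u) has_real_derivative std_normal_density x) (at x)"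
    by (auto intro!: derivative_eq_intros simp: has_real_derivative_iff_has_vector_derivative[symmetric])
  then show ?thesis
    by (simp add: Phi_eq_add_interval_integral[symmetric])
qed

lemma Phi_measurable [measurable]: "Phi \<in> borel_measurable borel"
  using DERIV_Phi DERIV_isCont
  by (intro borel_measurable_continuous_onI continuous_at_imp_continuous_on) blast

section \<open>Truncated normals and the probit likelihood\<close>

definition probit_lik :: "real \<Rightarrow> real \<Rightarrow> real" where
  "probit_lik y a = (if y = 1 then Phi a else 1 - Phi a)"

definition probit_score :: "real \<Rightarrow> real \<Rightarrow> real" where
  "probit_score y a = (if y = 1 then std_normal_density a / Phi a else - (std_normal_density a / (1 - Phi a)))"

lemma probit_lik_pos: "0 < probit_lik y a"
  using Phi_pos[of a] Phi_less_one[of a] by (simp add: probit_lik_def)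

lemma probit_lik_eq_powr: "y \<in> {0, 1} \<Longrightarrow> Phi a powr y * (1 - Phi a) powr (1 - y) = probit_lik y a"
  using Phi_pos[of a] Phi_less_one[of a] by (auto simp: probit_lik_def)

lemma DERIV_probit_lik: "(probit_lik y has_real_derivative (probit_lik y a * probit_score y a)) (at a)"
proof -
  have "(probit_lik y has_real_derivative (if y = 1 then std_normal_density a else - std_normal_density a)) (at a)"
    using DERIV_Phi[of a] by (auto simp: probit_lik_def[abs_def] intro!: derivative_eq_intros)
  moreover have "(if y = 1 then std_normal_density a else - std_normal_density a) = probit_lik y a * probit_score y a"
    using Phi_pos[of a] Phi_less_one[of a] by (simp add: probit_lik_def probit_score_def)
  ultimately show ?thesis
    by simp
qed

lemma DERIV_ln_probit_lik_line:
  "((\<lambda>t. ln (probit_lik y (a + t * c))) has_real_derivative (c * probit_score y a)) (at 0)"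
proof -
  have line: "((\<lambda>t. a + t * c) has_real_derivative c) (at 0)"
    by (auto intro!: derivative_eq_intros)
  have "((\<lambda>t. probit_lik y (a + t * c)) has_real_derivative (probit_lik y a * probit_score y a * c)) (at 0)"
    using DERIV_chain2[OF _ line, of "probit_lik y"] DERIV_probit_lik[of y a] by simp
  then have "((\<lambda>t. ln (probit_lik y (a + t * c))) has_real_derivative
      (1 / probit_lik y (a + 0 * c) * (probit_lik y a * probit_score y a * c))) (at 0)"
    by (rule DERIV_ln_divide[THEN DERIV_chain2, rotated]) (simp add: probit_lik_pos)
  then show ?thesis
    using probit_lik_pos[of y a] by (simp add: field_simps)
qed

lemma tn_density_measurable [measurable]: "tn_density \<theta> y \<in> borel_measurable borel"
  unfolding tn_density_def[abs_def] by measurable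

lemma tn_density_nonneg: "0 \<le> tn_density \<theta> y z"
  using Phi_pos[of \<theta>] Phi_less_one[of \<theta>] by (simp add: tn_density_def)

lemma tn_density_eq_indicator:
  "tn_density \<theta> y z = indicator (if y = 1 then {0<..} else {..<0}) z * normal_density \<theta> 1 z / probit_lik y \<theta>"
  by (simp add: tn_density_def probit_lik_def indicator_def)

lemma
  shows integrable_tn_density: "integrable lborel (tn_density \<theta> y)"
    and integral_tn_density: "(\<integral>z. tn_density \<theta> y z \<partial>lborel) = 1"
proof -
  define A where "A = (if y = 1 then {0<..} else {..<0 :: real})"
  have [measurable]: "A \<in> sets borel"
    by (simp add: A_def)
  have "(\<integral>z. indicator A z * normal_density \<theta> 1 z \<partial>lborel) = probit_lik y \<theta>"
    by (cases "y = 1")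
      (simp_all add: A_def probit_lik_def Phi_eq_integral_Ioi[symmetric] one_minus_Phi_eq_integral_Iio[symmetric])
  then show "integrable lborel (tn_density \<theta> y)" "(\<integral>z. tn_density \<theta> y z \<partial>lborel) = 1"
    using integrable_indicator_normal_density[of A \<theta>] probit_lik_pos[of y \<theta>]
    by (simp_all add: tn_density_eq_indicator[abs_def] A_def[symmetric])
qed

lemma
  shows integrable_tn_density_first_moment: "integrable lborel (\<lambda>z. z * tn_density \<theta> y z)"
    and integral_tn_density_first_moment: "(\<integral>z. z * tn_density \<theta> y z \<partial>lborel) = \<theta> + probit_score y \<theta>"
proof -
  define A where "A = (if y = 1 then {0<..} else {..<0 :: real})"
  have [measurable]: "A \<in> sets borel"
    by (simp add: A_def)
  have moment: "z * tn_density \<theta> y z = indicator A z * (z * normal_density \<theta> 1 z) / probit_lik y \<theta>" for z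
    by (simp add: tn_density_eq_indicator A_def)
  have "(\<integral>z. indicator A z * (z * normal_density \<theta> 1 z) \<partial>lborel)
      = (if y = 1 then \<theta> * Phi \<theta> + std_normal_density \<theta> else \<theta> * (1 - Phi \<theta>) - std_normal_density \<theta>)"
    by (cases "y = 1") (simp_all add: A_def integral_Ioi_normal_first_moment integral_Iio_normal_first_moment)
  also have "\<dots> = probit_lik y \<theta> * (\<theta> + probit_score y \<theta>)"
    using Phi_pos[of \<theta>] Phi_less_one[of \<theta>]
    by (simp add: probit_lik_def probit_score_def field_simps)
  finally have "(\<integral>z. indicator A z * (z * normal_density \<theta> 1 z) \<partial>lborel) = probit_lik y \<theta> * (\<theta> + probit_score y \<theta>)" .
  then show "integrable lborel (\<lambda>z. z * tn_density \<theta> y z)"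
    "(\<integral>z. z * tn_density \<theta> y z \<partial>lborel) = \<theta> + probit_score y \<theta>"
    using integrable_indicator_normal_moment[of A \<theta>] probit_lik_pos[of y \<theta>]
    by (simp_all add: moment)
qed

section \<open>Gaussian mixtures over products of truncated normals\<close>

definition tn_prod_density :: "('n::finite \<Rightarrow> real) \<Rightarrow> ('n \<Rightarrow> real) \<Rightarrow> real^'n \<Rightarrow> real" where
  "tn_prod_density a y z = (\<Prod>i\<in>UNIV. tn_density (a i) (y i) (z$i))"

lemma tn_prod_density_measurable [measurable]: "tn_prod_density a y \<in> borel_measurable borel"
  unfolding tn_prod_density_def[abs_def] by measurable

lemma tn_prod_density_nonneg: "0 \<le> tn_prod_density a y z"
  unfolding tn_prod_density_def by (intro prod_nonneg) (simp add: tn_density_nonneg)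

lemma
  shows integrable_tn_prod_density: "integrable lborel (tn_prod_density a y)"
    and integral_tn_prod_density: "(\<integral>z. tn_prod_density a y z \<partial>lborel) = 1"
  unfolding tn_prod_density_def[abs_def]
  using integrable_prod_vec_nth[of "\<lambda>i. tn_density (a i) (y i)"]
    integral_prod_vec_nth[of "\<lambda>i. tn_density (a i) (y i)"]
  by (simp_all add: integrable_tn_density integral_tn_density)

lemma
  fixes a y :: "'n::finite \<Rightarrow> real"
  assumes "integrable lborel (\<lambda>u. h u * tn_density (a j) (y j) u)"
  shows integrable_tn_prod_density_mult_nth: "integrable lborel (\<lambda>z. tn_prod_density a y z * h (z$j))"
    and integral_tn_prod_density_mult_nth:
      "(\<integral>z. tn_prod_density a y z * h (z$j) \<partial>lborel) = (\<integral>u. h u * tn_density (a j) (y j) u \<partial>lborel)"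
proof -
  define g where "g = (\<lambda>i u. (if i = j then h u else 1) * tn_density (a i) (y i) u)"
  have "integrable lborel (g i)" for i
    using assms integrable_tn_density[of "a i" "y i"] by (cases "i = j") (simp_all add: g_def)
  moreover have "(\<Prod>i\<in>UNIV. g i (z$i)) = tn_prod_density a y z * h (z$j)" for z
    by (simp add: g_def tn_prod_density_def prod.distrib prod.If_cases Int_absorb1)
  moreover have "integral\<^sup>L lborel (g i) = (if i = j then (\<integral>u. h u * tn_density (a j) (y j) u \<partial>lborel) else 1)" for i
    by (cases "i = j") (simp_all add: g_def integral_tn_density)
  then have "(\<Prod>i\<in>UNIV. integral\<^sup>L lborel (g i)) = (\<integral>u. h u * tn_density (a j) (y j) u \<partial>lborel)"
    by (simp add: prod.delta)
  ultimately show "integrable lborel (\<lambda>z. tn_prod_density a y z * h (z$j))"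
    "(\<integral>z. tn_prod_density a y z * h (z$j) \<partial>lborel) = (\<integral>u. h u * tn_density (a j) (y j) u \<partial>lborel)"
    using integrable_prod_vec_nth[of g] integral_prod_vec_nth[of g] by simp_all
qed

lemma integrable_tn_prod_density_norm: "integrable lborel (\<lambda>z::real^'n::finite. tn_prod_density a y z * norm z)"
proof (rule Bochner_Integration.integrable_bound)
  have "integrable lborel (\<lambda>u. \<bar>u\<bar> * tn_density (a j) (y j) u)" for j
    using integrable_abs[OF integrable_tn_density_first_moment] by (simp add: abs_mult tn_density_nonneg)
  then show "integrable lborel (\<lambda>z. \<Sum>j\<in>UNIV. tn_prod_density a y z * \<bar>z$j\<bar>)"
    by (intro Bochner_Integration.integrable_sum integrable_tn_prod_density_mult_nth)
  show "AE z in lborel. norm (tn_prod_density a y z * norm z) \<le> norm (\<Sum>j\<in>UNIV. tn_prod_density a y z * \<bar>z$j\<bar>)"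
  proof (rule AE_I2)
    fix z :: "real^'n"
    show "norm (tn_prod_density a y z * norm z) \<le> norm (\<Sum>j\<in>UNIV. tn_prod_density a y z * \<bar>z$j\<bar>)"
      using mult_left_mono[OF norm_le_l1_cart[of z] tn_prod_density_nonneg[of a y z]]
      by (simp add: sum_distrib_left[symmetric] tn_prod_density_nonneg sum_nonneg)
  qed
qed measurable

lemma integral_tn_prod_density_mean:
  fixes a :: "'n::finite \<Rightarrow> real"
  shows "(\<integral>z. tn_prod_density a y z *\<^sub>R z \<partial>lborel) = (\<chi> j. a j + probit_score (y j) (a j))"
proof -
  have coord: "integrable lborel (\<lambda>z. tn_prod_density a y z * z$j)"
    "(\<integral>z. tn_prod_density a y z * z$j \<partial>lborel) = a j + probit_score (y j) (a j)" for j
    using integrable_tn_prod_density_mult_nth[where h="\<lambda>u. u"] integral_tn_prod_density_mult_nth[where h="\<lambda>u. u"]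
    by (simp_all add: integrable_tn_density_first_moment integral_tn_density_first_moment)
  have expand: "tn_prod_density a y z *\<^sub>R z = (\<Sum>j\<in>UNIV. (tn_prod_density a y z * z$j) *\<^sub>R axis j 1)" for z :: "real^'n"
  proof -
    have "tn_prod_density a y z *\<^sub>R z = tn_prod_density a y z *\<^sub>R (\<Sum>j\<in>UNIV. z$j *\<^sub>R axis j 1)"
      using basis_expansion[of z] by (simp add: scalar_mult_eq_scaleR)
    then show ?thesis
      by (simp add: scaleR_sum_right)
  qed
  have "(\<integral>z. tn_prod_density a y z *\<^sub>R z \<partial>lborel) = (\<Sum>j\<in>UNIV. (a j + probit_score (y j) (a j)) *\<^sub>R axis j 1)"
    unfolding expand by (subst Bochner_Integration.integral_sum) (auto simp: coord)
  also have "\<dots> = (\<chi> j. a j + probit_score (y j) (a j))"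
    using basis_expansion[of "\<chi> j. a j + probit_score (y j) (a j)"] by (simp add: scalar_mult_eq_scaleR)
  finally show ?thesis .
qed

context
  fixes T :: "real^'n::finite \<Rightarrow> real" and A :: "real^'n^'p" and c :: "real^'p" and S :: "real^'p^'p"
  assumes pd: "pos_def_mat S" and T_measurable [measurable]: "T \<in> borel_measurable borel"
    and T_nonneg: "\<And>z. 0 \<le> T z" and T_int: "integrable lborel T"
    and T_norm: "integrable lborel (\<lambda>z. T z * norm z)"
begin

lemma integrable_gaussian_mixture_pair:
  "integrable (lborel \<Otimes>\<^sub>M lborel) (\<lambda>(z, b). (T z * mvn_prec_density (A *v z + c) S b) *\<^sub>R b)"
proof -
  define G where "G = (\<lambda>(z, b). (T z * mvn_prec_density (A *v z + c) S b) *\<^sub>R b)"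
  have [measurable]: "G \<in> borel_measurable (lborel \<Otimes>\<^sub>M lborel)"
    unfolding G_def mvn_prec_density_def by measurable
  obtain K where K: "\<And>z. norm (A *v z) \<le> norm z * K"
    using bounded_linear.bounded[OF matrix_vector_mul_bounded_linear[of A]] by blast
  define C where "C = (\<integral>u. mvn_prec_density 0 S u * norm u \<partial>lborel)"
  have inner_norm: "(\<integral>b. norm (G (z, b)) \<partial>lborel) \<le> K * (T z * norm z) + (norm c + C) * T z" for z
  proof -
    have "(\<integral>b. norm (G (z, b)) \<partial>lborel) = T z * (\<integral>b. mvn_prec_density (A *v z + c) S b * norm b \<partial>lborel)"
      by (simp add: G_def T_nonneg mvn_prec_density_nonneg[OF pd] abs_mult mult.assoc)
    also have "\<dots> \<le> T z * (norm (A *v z + c) + C)"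
      unfolding C_def by (intro mult_left_mono integral_mvn_prec_density_norm_le[OF pd] T_nonneg)
    also have "\<dots> \<le> T z * (norm z * K + norm c + C)"
      using K[of z] norm_triangle_ineq[of "A *v z" c] by (intro mult_left_mono T_nonneg) auto
    finally show ?thesis
      by (simp add: algebra_simps)
  qed
  have "integrable (lborel \<Otimes>\<^sub>M lborel) G"
  proof (rule lborel_pair.Fubini_integrable)
    show "integrable lborel (\<lambda>z. \<integral>b. norm (G (z, b)) \<partial>lborel)"
    proof (rule Bochner_Integration.integrable_bound)
      show "integrable lborel (\<lambda>z. K * (T z * norm z) + (norm c + C) * T z)"
        using T_norm T_int by simp
      show "(\<lambda>z. \<integral>b. norm (G (z, b)) \<partial>lborel) \<in> borel_measurable lborel"
        by (rule lborel.borel_measurable_lebesgue_integral) (simp add: case_prod_beta')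
      show "AE z in lborel. norm (\<integral>b. norm (G (z, b)) \<partial>lborel) \<le> norm (K * (T z * norm z) + (norm c + C) * T z)"
      proof (rule AE_I2)
        fix z
        have "0 \<le> (\<integral>b. norm (G (z, b)) \<partial>lborel)"
          by simp
        then show "norm (\<integral>b. norm (G (z, b)) \<partial>lborel) \<le> norm (K * (T z * norm z) + (norm c + C) * T z)"
          using inner_norm[of z] by simp
      qed
    qed
    show "AE z in lborel. integrable lborel (\<lambda>b. G (z, b))"
      using integrable_scaleR_right[OF integrable_mvn_prec_density_mean[OF pd], of "T _"]
      by (simp add: G_def)
  qed measurable
  then show ?thesis
    by (simp add: G_def)
qed

lemma integrable_gaussian_mixture_component:
  "integrable lborel (\<lambda>z. T z * mvn_prec_density (A *v z + c) S b)"
proof (rule Bochner_Integration.integrable_bound)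
  show "integrable lborel (\<lambda>z. ((2 * pi) powr (- real CARD('p) / 2) * sqrt (det S)) * T z)"
    using T_int by simp
  show "AE z in lborel. norm (T z * mvn_prec_density (A *v z + c) S b)
      \<le> norm ((2 * pi) powr (- real CARD('p) / 2) * sqrt (det S) * T z)"
    using mvn_prec_density_le[OF pd] mvn_prec_density_nonneg[OF pd] det_pos_if_pos_def_mat[OF pd] T_nonneg
    by (intro AE_I2) (simp add: abs_mult mult.commute mult_left_mono)
qed (simp add: mvn_prec_density_def)

lemma integrable_gaussian_mixture_mean:
  "integrable lborel (\<lambda>b. (\<integral>z. T z * mvn_prec_density (A *v z + c) S b \<partial>lborel) *\<^sub>R b)"
  using lborel_pair.integrable_snd[OF integrable_gaussian_mixture_pair] integrable_gaussian_mixture_component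
  by simp

lemma integral_gaussian_mixture_mean:
  assumes "integral\<^sup>L lborel T = 1"
  shows "(\<integral>b. (\<integral>z. T z * mvn_prec_density (A *v z + c) S b \<partial>lborel) *\<^sub>R b \<partial>lborel)
    = A *v (\<integral>z. T z *\<^sub>R z \<partial>lborel) + c"
proof -
  have mean: "integrable lborel (\<lambda>z. T z *\<^sub>R z)"
    using T_norm by (rule Bochner_Integration.integrable_bound) (auto simp: T_nonneg)
  have "(\<integral>b. (T z * mvn_prec_density (A *v z + c) S b) *\<^sub>R b \<partial>lborel) = T z *\<^sub>R (A *v z + c)" for z
    by (simp add: integral_mvn_prec_density_mean[OF pd] flip: scaleR_scaleR)
  then have "(\<integral>b. (\<integral>z. T z * mvn_prec_density (A *v z + c) S b \<partial>lborel) *\<^sub>R b \<partial>lborel)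
      = (\<integral>z. A *v (T z *\<^sub>R z) + T z *\<^sub>R c \<partial>lborel)"
    using lborel_pair.Fubini_integral[OF integrable_gaussian_mixture_pair] integrable_gaussian_mixture_component
    by (simp add: scaleR_add_right matrix_vector_mult_scaleR)
  also have "\<dots> = A *v (\<integral>z. T z *\<^sub>R z \<partial>lborel) + c"
    using integral_bounded_linear[OF matrix_vector_mul_bounded_linear mean] T_int assms
    by (simp add: integrable_bounded_linear[OF matrix_vector_mul_bounded_linear mean])
  finally show ?thesis .
qed

end

section \<open>The probit posterior and its mode\<close>

lemma probit_post_eq:
  assumes "\<forall>i. Y i \<in> {0, 1}"
  shows "probit_post X Y Q v \<beta>
    = (\<Prod>i\<in>UNIV. probit_lik (Y i) (X$i \<bullet> \<beta>)) * exp (- ((\<beta> - v) \<bullet> (Q *v (\<beta> - v))) / 2)"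
  unfolding probit_post_def probit_prior_def using assms by (simp add: probit_lik_eq_powr)

lemma probit_post_pos: "\<forall>i. Y i \<in> {0, 1} \<Longrightarrow> 0 < probit_post X Y Q v \<beta>"
  by (simp add: probit_post_eq prod_pos probit_lik_pos)

lemma probit_post_measurable [measurable]: "probit_post X Y Q v \<in> borel_measurable borel"
  unfolding probit_post_def[abs_def] probit_prior_def by measurable

lemma quadratic_form_add_scaled:
  fixes Q :: "real^'n^'n"
  shows "(w + t *\<^sub>R e) \<bullet> (Q *v (w + t *\<^sub>R e))
    = w \<bullet> (Q *v w) + t * (e \<bullet> (Q *v w) + w \<bullet> (Q *v e)) + t\<^sup>2 * (e \<bullet> (Q *v e))"
  by (simp add: matrix_vector_right_distrib matrix_vector_mult_scaleR inner_add_left inner_add_right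
      algebra_simps power2_eq_square)

lemma DERIV_ln_probit_post_line:
  fixes X :: "real^'p^'n" and Q :: "real^'p^'p"
  assumes Y01: "\<forall>i. Y i \<in> {0, 1}" and symQ: "transpose Q = Q"
  shows "((\<lambda>t. ln (probit_post X Y Q v (\<beta> + t *\<^sub>R e))) has_real_derivative
    e \<bullet> (transpose X *v (\<chi> i. probit_score (Y i) (X$i \<bullet> \<beta>)) - Q *v (\<beta> - v))) (at 0)"
proof -
  define w where "w = \<beta> - v"
  have "ln (probit_post X Y Q v (\<beta> + t *\<^sub>R e)) = (\<Sum>i\<in>UNIV. ln (probit_lik (Y i) (X$i \<bullet> \<beta> + t * (X$i \<bullet> e))))
      - (w \<bullet> (Q *v w) + t * (e \<bullet> (Q *v w) + w \<bullet> (Q *v e)) + t\<^sup>2 * (e \<bullet> (Q *v e))) / 2" for t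
  proof -
    have shift: "\<beta> + t *\<^sub>R e - v = w + t *\<^sub>R e"
      by (simp add: w_def algebra_simps)
    show ?thesis
      unfolding probit_post_eq[OF Y01] shift quadratic_form_add_scaled
      by (simp add: ln_mult prod_pos probit_lik_pos ln_prod inner_add_right
          less_imp_neq[OF probit_lik_pos, symmetric])
        (simp add: field_simps)
  qed
  moreover have "((\<lambda>t. (\<Sum>i\<in>UNIV. ln (probit_lik (Y i) (X$i \<bullet> \<beta> + t * (X$i \<bullet> e))))
      - (w \<bullet> (Q *v w) + t * (e \<bullet> (Q *v w) + w \<bullet> (Q *v e)) + t\<^sup>2 * (e \<bullet> (Q *v e))) / 2)
    has_real_derivative (\<Sum>i\<in>UNIV. (X$i \<bullet> e) * probit_score (Y i) (X$i \<bullet> \<beta>))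
      - (e \<bullet> (Q *v w) + w \<bullet> (Q *v e)) / 2) (at 0)"
    by (intro DERIV_diff DERIV_sum DERIV_ln_probit_lik_line) (auto intro!: derivative_eq_intros)
  moreover have "w \<bullet> (Q *v e) = e \<bullet> (Q *v w)"
    using inner_transpose_matrix_vector[of w Q e] symQ by (simp add: inner_commute)
  moreover have "(\<Sum>i\<in>UNIV. (X$i \<bullet> e) * probit_score (Y i) (X$i \<bullet> \<beta>))
      = e \<bullet> (transpose X *v (\<chi> i. probit_score (Y i) (X$i \<bullet> \<beta>)))"
    unfolding inner_transpose_matrix_vector by (simp add: inner_vec_def matrix_vector_mul_component)
  ultimately show ?thesis
    by (simp add: w_def inner_diff_right)
qed

lemma probit_mode_score_equation:
  fixes X :: "real^'p^'n" and Q :: "real^'p^'p"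
  assumes Y01: "\<forall>i. Y i \<in> {0, 1}" and symQ: "transpose Q = Q"
    and mode: "\<forall>\<beta>. probit_post X Y Q v \<beta> \<le> probit_post X Y Q v B"
  shows "transpose X *v (\<chi> i. probit_score (Y i) (X$i \<bullet> B)) = Q *v (B - v)"
proof -
  define d where "d = transpose X *v (\<chi> i. probit_score (Y i) (X$i \<bullet> B)) - Q *v (B - v)"
  have "((\<lambda>t. ln (probit_post X Y Q v (B + t *\<^sub>R d))) has_real_derivative d \<bullet> d) (at 0)"
    using DERIV_ln_probit_post_line[OF Y01 symQ, where X=X and v=v and \<beta>=B and e=d]
    unfolding d_def[symmetric] .
  moreover have "ln (probit_post X Y Q v (B + t *\<^sub>R d)) \<le> ln (probit_post X Y Q v (B + 0 *\<^sub>R d))" for t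
    by (subst ln_le_cancel_iff) (simp_all add: probit_post_pos[OF Y01] mode)
  ultimately have "d \<bullet> d = 0"
    by (intro DERIV_local_max[where d=1]) auto
  then show ?thesis
    by (simp add: d_def)
qed

lemma ac_Sigma_quadratic_form: "x \<bullet> (ac_Sigma X Q *v x) = (X *v x) \<bullet> (X *v x) + x \<bullet> (Q *v x)"
proof -
  have "ac_Sigma X Q *v x = transpose X *v (X *v x) + Q *v x"
    by (simp add: ac_Sigma_def matrix_vector_mult_add_rdistrib matrix_vector_mul_assoc)
  then show ?thesis
    by (simp only: inner_add_right inner_transpose_matrix_vector)
qed

text \<open>With a flat prior, properness of the posterior forces \<open>X\<close> to have full column rank: if
  \<open>X x = 0\<close> for some \<open>x \<noteq> 0\<close>, the posterior is constant along \<open>x\<close>.\<close>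

lemma pos_def_mat_ac_Sigma:
  fixes X :: "real^'p^'n" and Q :: "real^'p^'p"
  assumes Y01: "\<forall>i. Y i \<in> {0, 1}" and Q: "pos_def_mat Q \<or> Q = 0"
    and proper: "integrable lborel (probit_post X Y Q v)"
  shows "pos_def_mat (ac_Sigma X Q)"
  unfolding pos_def_mat_def
proof (intro conjI allI impI)
  have "transpose Q = Q"
    using Q by (auto simp: pos_def_mat_def transpose_def vec_eq_iff)
  moreover have "transpose (A + B) = transpose A + transpose B" for A B :: "real^'p^'p"
    by (simp add: transpose_def vec_eq_iff)
  ultimately show "transpose (ac_Sigma X Q) = ac_Sigma X Q"
    by (simp add: ac_Sigma_def matrix_transpose_mul)
  fix x :: "real^'p"
  assume "x \<noteq> 0"
  show "0 < x \<bullet> (ac_Sigma X Q *v x)"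
  proof (cases "pos_def_mat Q")
    case True
    then show ?thesis
      using \<open>x \<noteq> 0\<close> by (simp add: ac_Sigma_quadratic_form pos_def_mat_def add_nonneg_pos)
  next
    case False
    then have "Q = 0"
      using Q by simp
    have "X *v x \<noteq> 0"
    proof
      assume "X *v x = 0"
      then have "probit_post X Y Q v (b + t *\<^sub>R x) = probit_post X Y Q v b" for b t
        by (simp add: probit_post_eq[OF Y01] \<open>Q = 0\<close> inner_add_right matrix_vector_mul_component[symmetric]
            matrix_vector_right_distrib matrix_vector_mult_scaleR)
      then have "(\<integral>\<^sup>+b. ennreal (probit_post X Y Q v b) \<partial>lborel) = \<infinity>"
        using \<open>x \<noteq> 0\<close> probit_post_pos[OF Y01]
        by (intro nn_integral_translation_invariant_infinite) auto
      then show False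
        using proper probit_post_pos[OF Y01, of X Q v] by (simp add: integrable_iff_bounded less_imp_le)
    qed
    then show ?thesis
      by (simp add: ac_Sigma_quadratic_form \<open>Q = 0\<close>)
  qed
qed

lemma ac_kernel_eq_gaussian_mixture:
  "ac_kernel X Y Q v B b = (\<integral>z. tn_prod_density (\<lambda>i. X$i \<bullet> B) Y z
    * mvn_prec_density ((matrix_inv (ac_Sigma X Q) ** transpose X) *v z + matrix_inv (ac_Sigma X Q) *v (Q *v v))
        (ac_Sigma X Q) b \<partial>lborel)"
  by (simp only: ac_kernel_def tn_prod_density_def matrix_vector_right_distrib matrix_vector_mul_assoc)

lemma probit_mode_normal_equation:
  fixes X :: "real^'p^'n" and Q :: "real^'p^'p"
  assumes Y01: "\<forall>i. Y i \<in> {0, 1}" and symQ: "transpose Q = Q"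
    and mode: "\<forall>\<beta>. probit_post X Y Q v \<beta> \<le> probit_post X Y Q v B"
  shows "transpose X *v (\<integral>z. tn_prod_density (\<lambda>i. X$i \<bullet> B) Y z *\<^sub>R z \<partial>lborel) + Q *v v = ac_Sigma X Q *v B"
proof -
  define score where "score = (\<chi> i. probit_score (Y i) (X$i \<bullet> B))"
  have "(\<integral>z. tn_prod_density (\<lambda>i. X$i \<bullet> B) Y z *\<^sub>R z \<partial>lborel) = X *v B + score"
    by (simp add: score_def integral_tn_prod_density_mean vec_eq_iff matrix_vector_mul_component)
  moreover have "transpose X *v score = Q *v (B - v)"
    unfolding score_def using Y01 symQ mode by (rule probit_mode_score_equation)
  ultimately show ?thesis
    by (simp add: ac_Sigma_def matrix_vector_right_distrib matrix_vector_mult_add_rdistrib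
        matrix_vector_mul_assoc matrix_vector_mult_diff_distrib del: transpose_matrix_vector)
qed

theorem proposition3:
  fixes X :: "real^'p^'n" and Y :: "'n \<Rightarrow> real" and Q :: "real^'p^'p"
    and v :: "real^'p" and B :: "real^'p"
  assumes Y01: "\<forall>i. Y i \<in> {0, 1}"
    and Q: "pos_def_mat Q \<or> Q = 0"
    and proper: "integrable lborel (probit_post X Y Q v)"
    and mode: "\<forall>beta. probit_post X Y Q v beta \<le> probit_post X Y Q v B"
  shows "integrable lborel (\<lambda>beta. ac_kernel X Y Q v B beta *\<^sub>R beta)
    \<and> (\<integral>beta. ac_kernel X Y Q v B beta *\<^sub>R beta \<partial>lborel) = B"
proof -
  define S where "S = ac_Sigma X Q"
  define T where "T = tn_prod_density (\<lambda>i. X$i \<bullet> B) Y"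
  have pd: "pos_def_mat S"
    unfolding S_def using Y01 Q proper by (rule pos_def_mat_ac_Sigma)
  have "transpose Q = Q"
    using Q by (auto simp: pos_def_mat_def transpose_def vec_eq_iff)
  then have mean: "(matrix_inv S ** transpose X) *v (\<integral>z. T z *\<^sub>R z \<partial>lborel) + matrix_inv S *v (Q *v v) = B"
    using det_pos_if_pos_def_mat[OF pd] probit_mode_normal_equation[OF Y01 _ mode]
    unfolding S_def T_def by (intro matrix_inv_solve) auto
  have T: "T \<in> borel_measurable borel" "\<And>z. 0 \<le> T z" "integrable lborel T"
    "integrable lborel (\<lambda>z. T z * norm z)" "integral\<^sup>L lborel T = 1"
    by (simp_all add: T_def tn_prod_density_nonneg integrable_tn_prod_density integral_tn_prod_density
        integrable_tn_prod_density_norm)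
  show ?thesis
    unfolding ac_kernel_eq_gaussian_mixture S_def[symmetric] T_def[symmetric]
    using integrable_gaussian_mixture_mean[OF pd T(1-4)] integral_gaussian_mixture_mean[OF pd T] mean
    by simp
qed

end
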